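(* Let $M_{3/4}$ be the additive submonoid of $\mathbb{Q}$ generated by $\{(3/4)^n : n \in \mathbb{N}_0\}$. Let $f$ be a nonzero element of $\mathbb{Q}[M_{3/4}]$ such that some exponent $s$ in the support of $f$ satisfies the ACCP in $M_{3/4}$ (every ascending chain of principal ideals of $M_{3/4}$ starting at $s + M_{3/4}$ stabilizes). Then $f$ satisfies the ACCP in $\mathbb{Q}[M_{3/4}]$, i.e., every ascending chain of principal ideals of $\mathbb{Q}[M_{3/4}]$ starting at $f\,\mathbb{Q}[M_{3/4}]$ stabilizes.
   Context: $\mathbb{Q}[M_{3/4}]$ is the integral domain of polynomial expressions $\sum_{i} c_i x^{m_i}$ with nonzero $c_i \in \mathbb{Q}$ and distinct $m_i \in M_{3/4}$; the support of such an expression is the set of the $m_i$. *)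

theory Defs
  imports Complex_Main "HOL-Library.Poly_Mapping"
begin

inductive_set M34 :: "rat set" where
  zero: "0 \<in> M34"
| gen: "(3/4) ^ n \<in> M34"
| add: "a \<in> M34 \<Longrightarrow> b \<in> M34 \<Longrightarrow> a + b \<in> M34"

definition pidealM :: "rat \<Rightarrow> rat set" where
  "pidealM s = (\<lambda>c. s + c) ` M34"

text \<open>The monoid algebra Q[M34]: finitely supported functions rat =>0 rat with support in M34,
  multiplication is the convolution product of Poly_Mapping.\<close>
definition QM :: "(rat \<Rightarrow>\<^sub>0 rat) set" where
  "QM = {p. Poly_Mapping.keys p \<subseteq> M34}"

definition pidealR :: "(rat \<Rightarrow>\<^sub>0 rat) \<Rightarrow> (rat \<Rightarrow>\<^sub>0 rat) set" where
  "pidealR f = (\<lambda>q. f * q) ` QM"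

definition ACCP_M :: "rat \<Rightarrow> bool" where
  "ACCP_M s \<longleftrightarrow> (\<forall>a :: nat \<Rightarrow> rat.
     a 0 = s \<and> (\<forall>n. a n \<in> M34 \<and> pidealM (a n) \<subseteq> pidealM (a (Suc n)))
     \<longrightarrow> (\<exists>N. \<forall>n\<ge>N. pidealM (a n) = pidealM (a N)))"

definition ACCP_R :: "(rat \<Rightarrow>\<^sub>0 rat) \<Rightarrow> bool" where
  "ACCP_R f \<longleftrightarrow> (\<forall>g :: nat \<Rightarrow> (rat \<Rightarrow>\<^sub>0 rat).
     g 0 = f \<and> (\<forall>n. g n \<in> QM \<and> pidealR (g n) \<subseteq> pidealR (g (Suc n)))
     \<longrightarrow> (\<exists>N. \<forall>n\<ge>N. pidealR (g n) = pidealR (g N)))"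

end

theory Submission
  imports Defs
begin

text \<open>Write an ascending chain of principal ideals starting at \<open>f\<close> as \<open>g\<^sub>n = g\<^sub>n\<^sub>+\<^sub>1 h\<^sub>n\<close>.
  Every exponent in \<open>M\<^sub>3\<^sub>/\<^sub>4\<close> lies in \<open>\<int>[1/2]\<close>, every exponent below \<open>(3/4)\<^sup>K\<close> lies in
  \<open>3\<^sup>K \<int>[1/2]\<close>, and these subgroups intersect in \<open>0\<close>; so for large \<open>K\<close> the finitely many
  exponents of \<open>f\<close> are pairwise incongruent modulo \<open>3\<^sup>K \<int>[1/2]\<close>. The degrees of the \<open>h\<^sub>n\<close>
  sum to at most \<open>deg f\<close>, so eventually \<open>h\<^sub>n\<close> is supported below \<open>(3/4)\<^sup>K\<close>, hence in
  \<open>3\<^sup>K \<int>[1/2]\<close>; comparing lowest and highest exponents of \<open>f\<close> within one coset then shows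
  that \<open>h\<^sub>n\<close> is a monomial. Following the exponent \<open>s\<close> through the factorisations gives an
  ascending chain of principal ideals of \<open>M\<^sub>3\<^sub>/\<^sub>4\<close> starting at \<open>s\<close>; once it is stationary the
  monomials \<open>h\<^sub>n\<close> have exponent \<open>0\<close>, i.e. are units.\<close>

lemma lookup_mult_unique_decomposition:
  fixes p q :: "'a::monoid_add \<Rightarrow>\<^sub>0 'b::semiring_0"
  assumes unique: "\<And>u' v'. u' \<in> Poly_Mapping.keys p \<Longrightarrow> v' \<in> Poly_Mapping.keys q \<Longrightarrow>
    u' + v' = u + v \<Longrightarrow> u' = u \<and> v' = v"
  shows "Poly_Mapping.lookup (p * q) (u + v) = Poly_Mapping.lookup p u * Poly_Mapping.lookup q v"
proof -
  have fin: "finite {r. (Poly_Mapping.lookup q r when u + v = l + r) \<noteq> 0}" for l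
    by (rule finite_subset[of _ "Poly_Mapping.keys q"]) (auto simp: in_keys_iff)
  have summand: "Poly_Mapping.lookup p l * (Poly_Mapping.lookup q r when u + v = l + r)
      = ((Poly_Mapping.lookup p u * Poly_Mapping.lookup q v when r = v) when l = u)" for l r
  proof (cases "l = u \<and> r = v")
    case False
    then have "Poly_Mapping.lookup p l = 0 \<or> Poly_Mapping.lookup q r = 0 \<or> u + v \<noteq> l + r"
      using unique[of l r] by (auto simp: in_keys_iff)
    then show ?thesis using False by (auto simp: when_def)
  qed simp
  have "Poly_Mapping.lookup (p * q) (u + v)
      = (\<Sum>l. \<Sum>r. Poly_Mapping.lookup p l * (Poly_Mapping.lookup q r when u + v = l + r))"
    by (simp add: lookup_mult Sum_any_right_distrib[OF fin])
  also have "\<dots> = Poly_Mapping.lookup p u * Poly_Mapping.lookup q v"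
    by (simp add: summand Sum_any_when_independent)
  finally show ?thesis .
qed

lemma in_keys_mult_unique_decomposition:
  fixes p q :: "'a::monoid_add \<Rightarrow>\<^sub>0 'b::semiring_no_zero_divisors"
  assumes "u \<in> Poly_Mapping.keys p" and "v \<in> Poly_Mapping.keys q"
    and "\<And>u' v'. u' \<in> Poly_Mapping.keys p \<Longrightarrow> v' \<in> Poly_Mapping.keys q \<Longrightarrow>
      u' + v' = u + v \<Longrightarrow> u' = u \<and> v' = v"
  shows "u + v \<in> Poly_Mapping.keys (p * q)"
proof -
  have "Poly_Mapping.lookup (p * q) (u + v) = Poly_Mapping.lookup p u * Poly_Mapping.lookup q v"
    by (rule lookup_mult_unique_decomposition) (rule assms(3))
  with assms(1,2) show ?thesis by (simp add: in_keys_iff)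
qed

lemma add_eq_add_le_imp_eq:
  fixes a b c d :: "'a::linordered_ab_group_add"
  shows "a \<le> c \<Longrightarrow> b \<le> d \<Longrightarrow> a + b = c + d \<Longrightarrow> a = c \<and> b = d"
  by (metis add_le_cancel_left add_le_cancel_right add_mono antisym)

text \<open>The hypothesis \<open>closed\<close> holds for \<open>C = keys G\<close>, and for the exponents of \<open>G\<close> lying in
  one coset of a subgroup that contains \<open>keys h\<close>.\<close>

lemma Min_Max_add_in_keys_mult:
  fixes G h :: "'a::linordered_ab_group_add \<Rightarrow>\<^sub>0 'b::semiring_no_zero_divisors"
  assumes C: "finite C" "C \<noteq> {}" "C \<subseteq> Poly_Mapping.keys G" and "h \<noteq> 0"
    and closed: "\<And>u' v' w z. u' \<in> Poly_Mapping.keys G \<Longrightarrow> v' \<in> Poly_Mapping.keys h \<Longrightarrow>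
      w \<in> C \<Longrightarrow> z \<in> Poly_Mapping.keys h \<Longrightarrow> u' + v' = w + z \<Longrightarrow> u' \<in> C"
  shows "Min C + Min (Poly_Mapping.keys h) \<in> Poly_Mapping.keys (G * h)"
    and "Max C + Max (Poly_Mapping.keys h) \<in> Poly_Mapping.keys (G * h)"
proof -
  let ?V = "Poly_Mapping.keys h"
  have V: "finite ?V" "?V \<noteq> {}" using \<open>h \<noteq> 0\<close> by auto
  have C_keys: "Min C \<in> Poly_Mapping.keys G" "Max C \<in> Poly_Mapping.keys G"
    using Min_in[OF C(1,2)] Max_in[OF C(1,2)] C(3) by auto
  show "Min C + Min ?V \<in> Poly_Mapping.keys (G * h)"
  proof (rule in_keys_mult_unique_decomposition)
    fix u' v' assume uv: "u' \<in> Poly_Mapping.keys G" "v' \<in> ?V" "u' + v' = Min C + Min ?V"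
    then have "Min C \<le> u'" "Min ?V \<le> v'" using closed[of u' v' "Min C" "Min ?V"] C V by auto
    with uv(3) show "u' = Min C \<and> v' = Min ?V"
      using add_eq_add_le_imp_eq[of "Min C" u' "Min ?V" v'] by auto
  qed (use C_keys V in auto)
  show "Max C + Max ?V \<in> Poly_Mapping.keys (G * h)"
  proof (rule in_keys_mult_unique_decomposition)
    fix u' v' assume uv: "u' \<in> Poly_Mapping.keys G" "v' \<in> ?V" "u' + v' = Max C + Max ?V"
    then have "u' \<le> Max C" "v' \<le> Max ?V" using closed[of u' v' "Max C" "Max ?V"] C V by auto
    with uv(3) show "u' = Max C \<and> v' = Max ?V" by (intro add_eq_add_le_imp_eq)
  qed (use C_keys V in auto)
qed

lemma Max_keys_mult:
  fixes p q :: "'a::linordered_ab_group_add \<Rightarrow>\<^sub>0 'b::semiring_no_zero_divisors"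
  assumes "p \<noteq> 0" and "q \<noteq> 0"
  shows "Max (Poly_Mapping.keys (p * q)) = Max (Poly_Mapping.keys p) + Max (Poly_Mapping.keys q)"
proof (rule Max_eqI)
  fix w assume "w \<in> Poly_Mapping.keys (p * q)"
  then obtain u v where "w = u + v" "u \<in> Poly_Mapping.keys p" "v \<in> Poly_Mapping.keys q"
    using keys_mult by blast
  then show "w \<le> Max (Poly_Mapping.keys p) + Max (Poly_Mapping.keys q)"
    by (simp add: add_mono)
next
  show "Max (Poly_Mapping.keys p) + Max (Poly_Mapping.keys q) \<in> Poly_Mapping.keys (p * q)"
    by (rule Min_Max_add_in_keys_mult(2)) (use assms in auto)
qed simp

lemma keys_singleton_if_incongruent_mod:
  fixes G h :: "'a::linordered_ab_group_add \<Rightarrow>\<^sub>0 'b::semiring_no_zero_divisors"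
  assumes "G * h \<noteq> 0" and "Poly_Mapping.keys h \<subseteq> H"
    and H_diff: "\<And>x y. x \<in> H \<Longrightarrow> y \<in> H \<Longrightarrow> x - y \<in> H"
    and incongruent: "\<And>x y. x \<in> Poly_Mapping.keys (G * h) \<Longrightarrow> y \<in> Poly_Mapping.keys (G * h) \<Longrightarrow>
      x - y \<in> H \<Longrightarrow> x = y"
  shows "\<exists>b. Poly_Mapping.keys h = {b}"
proof -
  let ?V = "Poly_Mapping.keys h"
  have "G \<noteq> 0" and "h \<noteq> 0" using assms(1) by auto
  then obtain u0 v0 where u0: "u0 \<in> Poly_Mapping.keys G" and v0: "v0 \<in> ?V" by fastforce
  have V: "finite ?V" "?V \<noteq> {}" "\<And>v. v \<in> ?V \<Longrightarrow> v \<in> H" using v0 assms(2) by auto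
  \<comment> \<open>Restricted to one coset of \<open>H\<close>, the product \<open>G * h\<close> keeps both its lowest and its highest
    exponent; these are congruent modulo \<open>H\<close>, hence equal, which forces \<open>Min ?V = Max ?V\<close>.\<close>
  define C where "C = {u \<in> Poly_Mapping.keys G. u - u0 \<in> H}"
  have "u0 - u0 \<in> H" using H_diff[OF V(3)[OF v0] V(3)[OF v0]] by simp
  then have C: "finite C" "C \<noteq> {}" "C \<subseteq> Poly_Mapping.keys G" using u0 by (auto simp: C_def)
  have "Min C \<in> C" "Max C \<in> C" using C by simp_all
  then have C_coset: "Min C - u0 \<in> H" "Max C - u0 \<in> H" by (simp_all add: C_def)
  have closed: "u' \<in> C"
    if "u' \<in> Poly_Mapping.keys G" "v' \<in> ?V" "w \<in> C" "z \<in> ?V" "u' + v' = w + z" for u' v' w z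
  proof -
    have "u' - u0 = (w - u0) - (v' - z)" using that(5) by (simp add: algebra_simps)
    moreover have "(w - u0) - (v' - z) \<in> H"
    proof (rule H_diff)
      show "w - u0 \<in> H" using that(3) by (simp add: C_def)
      show "v' - z \<in> H" using H_diff[OF V(3)[OF that(2)] V(3)[OF that(4)]] .
    qed
    ultimately have "u' - u0 \<in> H" by (simp only:)
    with that(1) show ?thesis by (simp add: C_def)
  qed
  have extremes: "Min C + Min ?V \<in> Poly_Mapping.keys (G * h)"
    "Max C + Max ?V \<in> Poly_Mapping.keys (G * h)"
    using Min_Max_add_in_keys_mult[OF C \<open>h \<noteq> 0\<close>] closed by blast+
  have "(Max C + Max ?V) - (Min C + Min ?V) = ((Max C - u0) - (Min C - u0)) - (Min ?V - Max ?V)"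
    by (simp add: algebra_simps)
  also have "\<dots> \<in> H"
    using H_diff[OF H_diff[OF C_coset(2,1)] H_diff[OF V(3) V(3)]] V by simp
  finally have "Max C + Max ?V = Min C + Min ?V" using incongruent extremes by blast
  moreover have "Min C \<le> Max C" "Min ?V \<le> Max ?V" using C V by auto
  ultimately have "Min ?V = Max ?V" using add_eq_add_le_imp_eq by metis
  then have "v = Min ?V" if "v \<in> ?V" for v
    using that V(1) by (metis Max_ge Min_le antisym)
  then show ?thesis using Min_in[OF V(1,2)] by blast
qed

text \<open>\<open>pow3_dyadic K\<close> is \<open>3\<^sup>K \<int>[1/2]\<close>.\<close>

definition pow3_dyadic :: "nat \<Rightarrow> rat set" where
  "pow3_dyadic K = {x. \<exists>z::int. \<exists>j::nat. x * 4 ^ j = 3 ^ K * of_int z}"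

lemma zero_in_pow3_dyadic [simp]: "0 \<in> pow3_dyadic K"
  unfolding pow3_dyadic_def by (auto intro: exI[of _ 0])

lemma pow3_dyadic_diff:
  assumes "x \<in> pow3_dyadic K" and "y \<in> pow3_dyadic K"
  shows "x - y \<in> pow3_dyadic K"
proof -
  obtain z i where x: "x * 4 ^ i = 3 ^ K * of_int z" using assms(1) by (auto simp: pow3_dyadic_def)
  obtain w j where y: "y * 4 ^ j = 3 ^ K * of_int w" using assms(2) by (auto simp: pow3_dyadic_def)
  have "(x - y) * 4 ^ (i + j) = (x * 4 ^ i) * 4 ^ j - (y * 4 ^ j) * 4 ^ i"
    by (simp add: algebra_simps power_add)
  also have "\<dots> = 3 ^ K * of_int (z * 4 ^ j - w * 4 ^ i)"
    unfolding x y by (simp add: algebra_simps)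
  finally show ?thesis unfolding pow3_dyadic_def by blast
qed

lemma pow3_dyadic_add:
  "x \<in> pow3_dyadic K \<Longrightarrow> y \<in> pow3_dyadic K \<Longrightarrow> x + y \<in> pow3_dyadic K"
  using pow3_dyadic_diff[of x K "0 - y"] pow3_dyadic_diff[of 0 K y] by simp

lemma power_in_pow3_dyadic:
  assumes "K \<le> n"
  shows "(3/4) ^ n \<in> pow3_dyadic K"
proof -
  have "(3/4 :: rat) ^ n * 4 ^ n = 3 ^ K * of_int (3 ^ (n - K))"
    using assms by (simp add: power_divide flip: power_add)
  then show ?thesis unfolding pow3_dyadic_def by blast
qed

lemma M34_nonneg: "x \<in> M34 \<Longrightarrow> 0 \<le> x"
  by (induction rule: M34.induct) auto

lemma M34_subset_pow3_dyadic: "M34 \<subseteq> pow3_dyadic 0"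
proof
  show "x \<in> pow3_dyadic 0" if "x \<in> M34" for x
    using that by induction (auto intro: power_in_pow3_dyadic pow3_dyadic_add)
qed

lemma M34_less_in_pow3_dyadic:
  assumes "x \<in> M34" and "x < (3/4) ^ K"
  shows "x \<in> pow3_dyadic K"
  using assms
proof induction
  case (gen n)
  then have "K < n" by (simp add: power_strict_decreasing_iff)
  then show ?case by (simp add: power_in_pow3_dyadic)
next
  case (add a b)
  have "0 \<le> a" "0 \<le> b" using add.hyps by (simp_all add: M34_nonneg)
  with add.prems show ?case by (intro pow3_dyadic_add add.IH) auto
qed simp

lemma eventually_not_in_pow3_dyadic:
  assumes "x \<in> pow3_dyadic 0" and "x \<noteq> 0"
  shows "\<forall>\<^sub>F K in sequentially. x \<notin> pow3_dyadic K"
proof -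
  obtain z j where x: "x * 4 ^ j = of_int z" using assms(1) by (auto simp: pow3_dyadic_def)
  have "z \<noteq> 0" using x assms(2) by auto
  have "x \<notin> pow3_dyadic K" if "nat \<bar>z\<bar> \<le> K" for K
  proof
    assume "x \<in> pow3_dyadic K"
    then obtain w i where x': "x * 4 ^ i = 3 ^ K * of_int w" by (auto simp: pow3_dyadic_def)
    have "of_int (z * 4 ^ i) = (x * 4 ^ i) * (4::rat) ^ j" using x by (simp add: algebra_simps)
    also have "\<dots> = of_int (3 ^ K * (w * 4 ^ j))" using x' by simp
    finally have "(3::int) ^ K dvd z * 4 ^ i" by (simp only: of_int_eq_iff) simp
    moreover have "coprime (3::int) 4" by (simp add: coprime_iff_gcd_eq_1 gcd_non_0_int)
    then have "coprime ((3::int) ^ K) (4 ^ i)" by simp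
    ultimately have "(3::int) ^ K dvd z" using coprime_dvd_mult_left_iff by blast
    then have "(3::int) ^ K \<le> \<bar>z\<bar>" using dvd_imp_le_int[OF \<open>z \<noteq> 0\<close>, of "3 ^ K"] by simp
    moreover have "int K < 2 ^ K" "(2::int) ^ K \<le> 3 ^ K"
      using less_exp[of K] by (simp_all add: power_mono)
    ultimately show False using that by linarith
  qed
  then show ?thesis unfolding eventually_sequentially by blast
qed

lemma eventually_pow3_dyadic_separates:
  assumes "finite A" and "A \<subseteq> pow3_dyadic 0"
  shows "\<forall>\<^sub>F K in sequentially. \<forall>x\<in>A. \<forall>y\<in>A. x - y \<in> pow3_dyadic K \<longrightarrow> x = y"
proof (intro eventually_ball_finite ballI assms(1))
  fix x y assume "x \<in> A" "y \<in> A"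
  show "\<forall>\<^sub>F K in sequentially. x - y \<in> pow3_dyadic K \<longrightarrow> x = y"
  proof (cases "x = y")
    case False
    have "x - y \<in> pow3_dyadic 0" using \<open>x \<in> A\<close> \<open>y \<in> A\<close> assms(2) by (auto intro: pow3_dyadic_diff)
    with False show ?thesis by (auto elim: eventually_mono dest: eventually_not_in_pow3_dyadic)
  qed simp
qed

lemma eventually_less_if_telescoping:
  fixes D E :: "nat \<Rightarrow> 'a::archimedean_field"
  assumes DE: "\<And>n. D n = D (Suc n) + E n"
    and "\<And>n. 0 \<le> D n" and "\<And>n. 0 \<le> E n" and "0 < \<epsilon>"
  shows "\<forall>\<^sub>F n in sequentially. E n < \<epsilon>"
proof (rule ccontr)
  assume "\<not> (\<forall>\<^sub>F n in sequentially. E n < \<epsilon>)"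
  then have "infinite {n. \<not> E n < \<epsilon>}"
    by (simp flip: cofinite_eq_sequentially add: eventually_cofinite)
  moreover obtain k where k: "D 0 < of_nat k * \<epsilon>" using ex_less_of_nat_mult[OF \<open>0 < \<epsilon>\<close>] by blast
  ultimately obtain B where B: "finite B" "card B = k" "B \<subseteq> {n. \<not> E n < \<epsilon>}"
    using infinite_arbitrarily_large by blast
  then obtain m where "B \<subseteq> {..<m}" by (auto simp: finite_nat_set_iff_bounded)
  have telescope: "D 0 = D n + (\<Sum>i<n. E i)" for n
    by (induction n) (simp_all add: DE[symmetric])
  have "of_nat k * \<epsilon> = (\<Sum>i\<in>B. \<epsilon>)" using B(2) by simp
  also have "\<dots> \<le> (\<Sum>i\<in>B. E i)" using B(3) by (intro sum_mono) auto
  also have "\<dots> \<le> (\<Sum>i<m. E i)"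
    using \<open>B \<subseteq> {..<m}\<close> assms(3) by (intro sum_mono2) auto
  also have "\<dots> \<le> D 0" using telescope[of m] assms(2)[of m] by simp
  finally show False using k by simp
qed

lemma eventually_Suc_eq_imp_stable:
  assumes "\<forall>\<^sub>F n in sequentially. F (Suc n) = F n"
  shows "\<exists>N. \<forall>n\<ge>N. F n = F N"
proof -
  obtain N where N: "\<And>n. N \<le> n \<Longrightarrow> F (Suc n) = F n"
    using assms unfolding eventually_sequentially by blast
  have "F n = F N" if "N \<le> n" for n
    using that by (induction rule: dec_induct) (simp_all add: N)
  then show ?thesis by blast
qed

lemma chain_eq_mult_prod_cofactors:
  fixes g h :: "nat \<Rightarrow> 'a::comm_monoid_mult"
  assumes "\<And>n. g n = g (Suc n) * h n"
  shows "g 0 = g n * prod h {..<n}"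
proof (induction n)
  case (Suc n)
  then show ?case by (simp add: assms[of n] ac_simps)
qed simp

lemma eventually_Max_keys_cofactor_less:
  fixes g h :: "nat \<Rightarrow> 'a::archimedean_field \<Rightarrow>\<^sub>0 'b::semiring_no_zero_divisors"
  assumes gh: "\<And>n. g n = g (Suc n) * h n" and "g 0 \<noteq> 0"
    and g_nonneg: "\<And>n. Poly_Mapping.keys (g n) \<subseteq> {0..}"
    and h_nonneg: "\<And>n. Poly_Mapping.keys (h n) \<subseteq> {0..}"
    and "0 < \<epsilon>"
  shows "\<forall>\<^sub>F n in sequentially. Max (Poly_Mapping.keys (h n)) < \<epsilon>"
proof (rule eventually_less_if_telescoping)
  have g_nz: "g n \<noteq> 0" for n
  proof (induction n)
    case (Suc n)
    then show ?case using gh[of n] by auto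
  qed fact
  then have h_nz: "h n \<noteq> 0" for n
    using gh[of n] by auto
  show "Max (Poly_Mapping.keys (g n))
      = Max (Poly_Mapping.keys (g (Suc n))) + Max (Poly_Mapping.keys (h n))" for n
    using Max_keys_mult[OF g_nz h_nz] gh[of n] by simp
  have Max_nonneg: "0 \<le> Max (Poly_Mapping.keys p)"
    if "p \<noteq> 0" and "Poly_Mapping.keys p \<subseteq> {0..}" for p :: "'a \<Rightarrow>\<^sub>0 'b"
  proof -
    have "Max (Poly_Mapping.keys p) \<in> Poly_Mapping.keys p" using that(1) by (intro Max_in) auto
    with that(2) show ?thesis by auto
  qed
  show "0 \<le> Max (Poly_Mapping.keys (g n))" for n
    using Max_nonneg g_nz g_nonneg by blast
  show "0 \<le> Max (Poly_Mapping.keys (h n))" for n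
    using Max_nonneg h_nz h_nonneg by blast
qed fact

lemma keys_path_through_chain:
  fixes g h :: "nat \<Rightarrow> 'a::ab_group_add \<Rightarrow>\<^sub>0 'b::semiring_0"
  assumes gh: "\<And>n. g n = g (Suc n) * h n" and "s \<in> Poly_Mapping.keys (g 0)"
  obtains u where "u 0 = s" and "\<And>n. u n \<in> Poly_Mapping.keys (g n)"
    and "\<And>n. u n - u (Suc n) \<in> Poly_Mapping.keys (h n)"
proof -
  have "\<exists>u. \<forall>n. (u n \<in> Poly_Mapping.keys (g n) \<and> (n = 0 \<longrightarrow> u n = s))
      \<and> u n - u (Suc n) \<in> Poly_Mapping.keys (h n)"
  proof (rule dependent_nat_choice)
    fix x n assume "x \<in> Poly_Mapping.keys (g n) \<and> (n = 0 \<longrightarrow> x = s)"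
    then have "x \<in> Poly_Mapping.keys (g (Suc n) * h n)" using gh[of n] by simp
    then obtain a b where "x = a + b" "a \<in> Poly_Mapping.keys (g (Suc n))" "b \<in> Poly_Mapping.keys (h n)"
      using keys_mult by blast
    then show "\<exists>y. (y \<in> Poly_Mapping.keys (g (Suc n)) \<and> (Suc n = 0 \<longrightarrow> y = s))
        \<and> x - y \<in> Poly_Mapping.keys (h n)"
      by (intro exI[of _ a]) simp
  qed (use assms(2) in auto)
  then show ?thesis using that by blast
qed

lemma pidealM_mono: "a - b \<in> M34 \<Longrightarrow> pidealM a \<subseteq> pidealM b"
  unfolding pidealM_def by (auto intro!: image_eqI[of _ _ "a - b + c" for c] M34.add)

lemma pidealM_inject:
  assumes "pidealM a = pidealM b"
  shows "a = b"
proof -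
  have "a \<in> pidealM b" "b \<in> pidealM a"
    using assms M34.zero unfolding pidealM_def by force+
  then obtain c d where "c \<in> M34" "a = b + c" "d \<in> M34" "b = a + d"
    unfolding pidealM_def by blast
  then show ?thesis using M34_nonneg[of c] M34_nonneg[of d] by linarith
qed

lemma ACCP_M_path_stable:
  assumes "ACCP_M (u 0)" and "\<And>n. u n \<in> M34" and "\<And>n. u n - u (Suc n) \<in> M34"
  shows "\<forall>\<^sub>F n in sequentially. u (Suc n) = u n"
proof -
  have "\<And>n. pidealM (u n) \<subseteq> pidealM (u (Suc n))" using assms(3) by (rule pidealM_mono)
  then obtain N where N: "\<And>n. N \<le> n \<Longrightarrow> pidealM (u n) = pidealM (u N)"
    using assms(1,2) unfolding ACCP_M_def by blast
  have "u (Suc n) = u n" if "N \<le> n" for n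
    using N[of n] N[of "Suc n"] that by (intro pidealM_inject) simp
  then show ?thesis unfolding eventually_sequentially by blast
qed

lemma single_in_QM [simp]: "Poly_Mapping.single 0 c \<in> QM"
  by (simp add: QM_def M34.zero)

lemma one_in_QM: "1 \<in> QM"
  using single_in_QM[of 1] by simp

lemma QM_mult: "p \<in> QM \<Longrightarrow> q \<in> QM \<Longrightarrow> p * q \<in> QM"
  unfolding QM_def using keys_mult by (fastforce intro: M34.add)

lemma pidealR_chain_cofactors:
  assumes "\<And>n. pidealR (g n) \<subseteq> pidealR (g (Suc n))"
  obtains h where "\<And>n. h n \<in> QM" and "\<And>n. g n = g (Suc n) * h n"
proof -
  have "g n \<in> pidealR (g (Suc n))" for n
    using assms[of n] one_in_QM unfolding pidealR_def by force
  then have "\<forall>n. \<exists>q. q \<in> QM \<and> g n = g (Suc n) * q" unfolding pidealR_def by blast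
  then show ?thesis using that by metis
qed

lemma keys_eq_zero_imp_single:
  fixes p :: "'a::zero \<Rightarrow>\<^sub>0 'b::zero"
  assumes "Poly_Mapping.keys p = {0}"
  shows "p = Poly_Mapping.single 0 (Poly_Mapping.lookup p 0)"
proof (rule poly_mapping_eqI)
  fix k
  show "Poly_Mapping.lookup p k = Poly_Mapping.lookup (Poly_Mapping.single 0 (Poly_Mapping.lookup p 0)) k"
  proof (cases "k = 0")
    case False
    then have "k \<notin> Poly_Mapping.keys p" using assms by blast
    with False show ?thesis by (simp add: in_keys_iff lookup_single_not_eq)
  qed simp
qed

lemma pidealR_mult_unit:
  assumes "Poly_Mapping.keys h = {0}"
  shows "pidealR (g * h) = pidealR g"
proof -
  define c where "c = Poly_Mapping.lookup h 0"
  have h: "h = Poly_Mapping.single 0 c" and "c \<noteq> 0"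
    using keys_eq_zero_imp_single[OF assms] assms by (auto simp: c_def in_keys_iff)
  have inverse: "h * Poly_Mapping.single 0 (1 / c) = 1"
    using \<open>c \<noteq> 0\<close> by (simp add: h mult_single)
  show ?thesis
  proof
    show "pidealR (g * h) \<subseteq> pidealR g"
      unfolding pidealR_def h by (auto simp: mult.assoc intro!: imageI QM_mult)
    show "pidealR g \<subseteq> pidealR (g * h)"
    proof
      fix x assume "x \<in> pidealR g"
      then obtain q where "q \<in> QM" "x = g * q" unfolding pidealR_def by blast
      then have "x = g * h * (Poly_Mapping.single 0 (1 / c) * q)"
        by (simp add: mult.assoc flip: inverse)
      then show "x \<in> pidealR (g * h)"
        unfolding pidealR_def using \<open>q \<in> QM\<close> by (blast intro: QM_mult single_in_QM)
    qed
  qed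
qed

lemma eventually_cofactor_monomial:
  assumes g_QM: "\<And>n. g n \<in> QM" and "g 0 \<noteq> 0"
    and h_QM: "\<And>n. h n \<in> QM" and gh: "\<And>n. g n = g (Suc n) * h n"
  shows "\<forall>\<^sub>F n in sequentially. \<exists>b. Poly_Mapping.keys (h n) = {b}"
proof -
  have keys_M34: "Poly_Mapping.keys (g n) \<subseteq> M34" "Poly_Mapping.keys (h n) \<subseteq> M34" for n
    using g_QM h_QM by (auto simp: QM_def)
  have "Poly_Mapping.keys (g 0) \<subseteq> pow3_dyadic 0"
    using keys_M34(1)[of 0] M34_subset_pow3_dyadic by blast
  then have "\<forall>\<^sub>F K in sequentially. \<forall>x\<in>Poly_Mapping.keys (g 0). \<forall>y\<in>Poly_Mapping.keys (g 0).
      x - y \<in> pow3_dyadic K \<longrightarrow> x = y"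
    by (intro eventually_pow3_dyadic_separates) simp_all
  then obtain K where separated: "\<And>x y. x \<in> Poly_Mapping.keys (g 0) \<Longrightarrow>
      y \<in> Poly_Mapping.keys (g 0) \<Longrightarrow> x - y \<in> pow3_dyadic K \<Longrightarrow> x = y"
    unfolding eventually_sequentially by blast
  have "\<forall>\<^sub>F n in sequentially. Max (Poly_Mapping.keys (h n)) < (3/4) ^ K"
  proof (rule eventually_Max_keys_cofactor_less[OF gh \<open>g 0 \<noteq> 0\<close>])
    show "Poly_Mapping.keys (g n) \<subseteq> {0..}" "Poly_Mapping.keys (h n) \<subseteq> {0..}" for n
      using keys_M34[of n] M34_nonneg by auto
  qed simp
  then show ?thesis
  proof eventually_elim
    case (elim n)
    have "Poly_Mapping.keys (h n) \<subseteq> pow3_dyadic K"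
    proof
      fix v assume "v \<in> Poly_Mapping.keys (h n)"
      with elim have "v < (3/4) ^ K" by (meson Max_ge finite_keys le_less_trans)
      with \<open>v \<in> Poly_Mapping.keys (h n)\<close> keys_M34 show "v \<in> pow3_dyadic K"
        by (blast intro: M34_less_in_pow3_dyadic)
    qed
    moreover have factor: "g (Suc n) * prod h {..<n} * h n = g 0"
      using chain_eq_mult_prod_cofactors[of g h, OF gh, of n] gh[of n] by (simp add: ac_simps)
    ultimately show ?case
      using \<open>g 0 \<noteq> 0\<close> separated pow3_dyadic_diff
      by (intro keys_singleton_if_incongruent_mod[of "g (Suc n) * prod h {..<n}" "h n" "pow3_dyadic K"])
        (simp_all only: factor, blast+)
  qed
qed

theorem proposition4p8:
  fixes f :: "rat \<Rightarrow>\<^sub>0 rat" and s :: rat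
  assumes "f \<in> QM" and "f \<noteq> 0"
    and "s \<in> Poly_Mapping.keys f" and "ACCP_M s"
  shows "ACCP_R f"
  unfolding ACCP_R_def
proof (intro allI impI, elim conjE)
  fix g assume g0: "g 0 = f" and chain: "\<forall>n. g n \<in> QM \<and> pidealR (g n) \<subseteq> pidealR (g (Suc n))"
  obtain h where h_QM: "\<And>n. h n \<in> QM" and gh: "\<And>n. g n = g (Suc n) * h n"
    using pidealR_chain_cofactors chain by metis
  have "s \<in> Poly_Mapping.keys (g 0)" using g0 assms(3) by simp
  then obtain u where "u 0 = s" and u_keys: "\<And>n. u n \<in> Poly_Mapping.keys (g n)"
    and u_step: "\<And>n. u n - u (Suc n) \<in> Poly_Mapping.keys (h n)"
    using keys_path_through_chain[of g h, OF gh] by blast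
  have "\<forall>\<^sub>F n in sequentially. u (Suc n) = u n"
  proof (rule ACCP_M_path_stable)
    show "ACCP_M (u 0)" using \<open>u 0 = s\<close> assms(4) by simp
    show "u n \<in> M34" for n using u_keys[of n] chain by (auto simp: QM_def)
    show "u n - u (Suc n) \<in> M34" for n using u_step[of n] h_QM[of n] by (auto simp: QM_def)
  qed
  moreover have "\<forall>\<^sub>F n in sequentially. \<exists>b. Poly_Mapping.keys (h n) = {b}"
    using chain g0 assms(2) by (intro eventually_cofactor_monomial[of g h, OF _ _ h_QM gh]) simp_all
  ultimately have "\<forall>\<^sub>F n in sequentially. pidealR (g (Suc n)) = pidealR (g n)"
  proof eventually_elim
    case (elim n)
    then have "Poly_Mapping.keys (h n) = {0}" using u_step[of n] by auto
    then show ?case using pidealR_mult_unit[of "h n" "g (Suc n)"] gh[of n] by simp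
  qed
  then show "\<exists>N. \<forall>n\<ge>N. pidealR (g n) = pidealR (g N)"
    by (rule eventually_Suc_eq_imp_stable)
qed

end
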